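(* Let $n\ge1$, let $p$ be a prime, and let $L(\mathbf{X})=\sum_{i,j=1}^n a_{ij}x_{ij}\in\mathbb{Z}[\mathbf{X}]$ be a linear form in the $n^2$ variables $\mathbf{X}=(x_{ij})_{i,j=1}^n$ which does not vanish modulo $p$ (i.e. not all $a_{ij}$ are divisible by $p$). Then \[ S_{p^2}(L)=\sum_{\substack{\mathbf{X}\in\mathbb{Z}_{p^2}^{n\times n}\\ \det\mathbf{X}\equiv0 \bmod p^2}}\exp\left(2\pi i\,L(\mathbf{X})/p^2\right)\ll p^{2n^2-(n+3)/2}, \] where the implied constant depends only on $n$.
   Context: $\mathbb{Z}_{m}$ denotes the residue ring modulo $m$, represented by $\{0,\dots,m-1\}$. *)

theory Defs
  imports Complex_Main "HOL-Combinatorics.Permutations" "HOL-Computational_Algebra.Primes"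
begin

definition det_n :: "nat \<Rightarrow> (nat \<times> nat \<Rightarrow> int) \<Rightarrow> int" where
  "det_n n X = (\<Sum>\<sigma> | \<sigma> permutes {..<n}. sign \<sigma> * (\<Prod>i<n. X (i, \<sigma> i)))"

definition S_sum :: "nat \<Rightarrow> nat \<Rightarrow> (nat \<times> nat \<Rightarrow> int) \<Rightarrow> complex" where
  "S_sum n p a = (\<Sum>X \<in> {X \<in> ({..<n} \<times> {..<n}) \<rightarrow>\<^sub>E {0..<int p ^ 2}. int p ^ 2 dvd det_n n X}.
      exp (2 * pi * \<i> * of_int (\<Sum>ij \<in> {..<n} \<times> {..<n}. a ij * X ij) / of_nat (p ^ 2)))"

end

theory Submission
  imports Defs "HOL-Analysis.Complex_Transcendental" "HOL-Number_Theory.Cong"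
begin

text \<open>
  Choose a row i of the coefficient matrix with an entry a(i,k0) prime to p and group the
  matrices X by their other n - 1 rows. On such a fibre det X is the linear form
  \<open>\<Sum>k. X(i,k) c_k\<close> in row i, the c_k being cofactors that are constant on the fibre.
  Translating row i by h multiplies each term of the fibre sum by e(\<open>\<Sum>k. a(i,k) h_k\<close> / p^2)
  and changes det X by \<open>\<Sum>k. h_k c_k\<close>; so the fibre sum vanishes as soon as some h has
  \<open>\<Sum>k. h_k c_k\<close> divisible by p^2 but \<open>\<Sum>k. a(i,k) h_k\<close> not.
  Taking for h another row of X (det X does not change, two rows being equal) kills every
  fibre whose other rows are not all orthogonal to row i of a modulo p^2; there are at most
  p^(2(n-1)^2) such choices of the other rows. Taking h = p e_k0 kills the fibres on which p
  divides c_k0. On the remaining fibres c_k0 is a unit modulo p^2, so row i is determined by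
  its other n - 1 entries and the fibre has at most p^(2(n-1)) elements.
  Altogether |S| is at most p^(2n(n-1)), which is at most p^(2n^2 - (n+3)/2).
\<close>

definition upd_row :: "nat \<Rightarrow> (nat \<times> nat \<Rightarrow> int) \<Rightarrow> (nat \<Rightarrow> int) \<Rightarrow> nat \<times> nat \<Rightarrow> int" where
  "upd_row i X r = (\<lambda>(j, l). if j = i then r l else X (j, l))"

definition cofactor :: "nat \<Rightarrow> nat \<Rightarrow> (nat \<times> nat \<Rightarrow> int) \<Rightarrow> nat \<Rightarrow> int" where
  "cofactor n i X k = det_n n (upd_row i X (\<lambda>l. if l = k then 1 else 0))"

lemma det_n_cong:
  assumes "\<And>j l. j < n \<Longrightarrow> l < n \<Longrightarrow> X (j, l) = Y (j, l)"
  shows "det_n n X = det_n n Y"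
  unfolding det_n_def
proof (rule sum.cong[OF refl])
  fix \<sigma> assume "\<sigma> \<in> {\<sigma>. \<sigma> permutes {..<n}}"
  then have "\<sigma> j < n" if "j < n" for j
    using permutes_in_image that by fastforce
  then show "sign \<sigma> * (\<Prod>j<n. X (j, \<sigma> j)) = sign \<sigma> * (\<Prod>j<n. Y (j, \<sigma> j))"
    using assms by (metis (no_types, lifting) lessThan_iff prod.cong)
qed

lemma prod_upd_row:
  assumes "i < n"
  shows "(\<Prod>j<n. upd_row i X r (j, \<sigma> j)) = r (\<sigma> i) * (\<Prod>j\<in>{..<n} - {i}. X (j, \<sigma> j))"
proof -
  have "(\<Prod>j<n. upd_row i X r (j, \<sigma> j))
      = upd_row i X r (i, \<sigma> i) * (\<Prod>j\<in>{..<n} - {i}. upd_row i X r (j, \<sigma> j))"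
    using assms by (subst prod.remove[of _ i]) auto
  also have "(\<Prod>j\<in>{..<n} - {i}. upd_row i X r (j, \<sigma> j)) = (\<Prod>j\<in>{..<n} - {i}. X (j, \<sigma> j))"
    by (rule prod.cong) (auto simp: upd_row_def)
  finally show ?thesis by (simp add: upd_row_def)
qed

lemma det_n_upd_row:
  assumes "i < n"
  shows "det_n n (upd_row i X r) = (\<Sum>k<n. r k * cofactor n i X k)"
proof -
  let ?S = "{\<sigma>. \<sigma> permutes {..<n}}"
  let ?P = "\<lambda>\<sigma>. sign \<sigma> * (\<Prod>j\<in>{..<n} - {i}. X (j, \<sigma> j))"
  have "(\<Sum>k<n. r k * cofactor n i X k) = (\<Sum>k<n. \<Sum>\<sigma>\<in>?S. if k = \<sigma> i then r k * ?P \<sigma> else 0)"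
    unfolding cofactor_def det_n_def using assms
    by (auto simp: prod_upd_row sum_distrib_left intro!: sum.cong)
  also have "\<dots> = (\<Sum>\<sigma>\<in>?S. \<Sum>k<n. if k = \<sigma> i then r k * ?P \<sigma> else 0)"
    by (rule sum.swap)
  also have "\<dots> = (\<Sum>\<sigma>\<in>?S. r (\<sigma> i) * ?P \<sigma>)"
    using assms by (intro sum.cong refl) (auto dest: permutes_in_image[where x = i])
  also have "\<dots> = det_n n (upd_row i X r)"
    unfolding det_n_def using assms by (simp add: prod_upd_row algebra_simps)
  finally show ?thesis by simp
qed

lemma det_n_row_expansion:
  assumes "i < n"
  shows "det_n n X = (\<Sum>k<n. X (i, k) * cofactor n i X k)"
proof -
  have "upd_row i X (\<lambda>l. X (i, l)) = X" by (auto simp: upd_row_def)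
  then show ?thesis using det_n_upd_row[OF assms, of X "\<lambda>l. X (i, l)"] by simp
qed

lemma det_n_equal_rows:
  assumes "i < n" "m < n" "i \<noteq> m" "\<And>l. l < n \<Longrightarrow> X (i, l) = X (m, l)"
  shows "det_n n X = 0"
proof -
  let ?t = "Transposition.transpose i m"
  let ?f = "\<lambda>\<sigma>. sign \<sigma> * (\<Prod>j<n. X (j, \<sigma> j))"
  have t: "?t permutes {..<n}" using assms by (intro permutes_swap_id) auto
  have "det_n n X = (\<Sum>\<sigma> | \<sigma> permutes {..<n}. ?f (\<sigma> \<circ> ?t))"
    unfolding det_n_def by (rule sum_permutations_compose_right[OF t])
  also have "\<dots> = (\<Sum>\<sigma> | \<sigma> permutes {..<n}. - ?f \<sigma>)"
  proof (rule sum.cong[OF refl])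
    fix \<sigma> assume "\<sigma> \<in> {\<sigma>. \<sigma> permutes {..<n}}"
    then have \<sigma>: "\<sigma> permutes {..<n}" by simp
    have "sign (\<sigma> \<circ> ?t) = - sign \<sigma>"
      using permutes_imp_permutation[OF _ \<sigma>] permutes_imp_permutation[OF _ t] assms(3)
      by (simp add: sign_compose sign_swap_id)
    moreover have "(\<Prod>j<n. X (j, \<sigma> (?t j))) = (\<Prod>j<n. X (?t j, \<sigma> (?t j)))"
    proof (rule prod.cong[OF refl])
      fix j assume "j \<in> {..<n}"
      then have "\<sigma> (?t j) < n" using permutes_in_image[OF \<sigma>] permutes_in_image[OF t] by auto
      then show "X (j, \<sigma> (?t j)) = X (?t j, \<sigma> (?t j))"
        using assms by (cases "j = i"; cases "j = m") (auto simp: transpose_apply_other)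
    qed
    moreover have "(\<Prod>j<n. X (?t j, \<sigma> (?t j))) = (\<Prod>j<n. X (j, \<sigma> j))"
      using prod.permute[OF t, of "\<lambda>j. X (j, \<sigma> j)"] by (simp add: comp_def)
    ultimately show "?f (\<sigma> \<circ> ?t) = - ?f \<sigma>" by simp
  qed
  also have "\<dots> = - det_n n X" unfolding det_n_def by (simp add: sum_negf)
  finally show ?thesis by simp
qed

lemma cofactor_cong:
  assumes "\<And>j l. j < n \<Longrightarrow> j \<noteq> i \<Longrightarrow> l < n \<Longrightarrow> X (j, l) = Y (j, l)"
  shows "cofactor n i X k = cofactor n i Y k"
  unfolding cofactor_def using assms by (intro det_n_cong) (auto simp: upd_row_def)

lemma alien_cofactor_expansion:
  assumes "i < n" "m < n" "m \<noteq> i"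
  shows "(\<Sum>k<n. X (m, k) * cofactor n i X k) = 0"
proof -
  have "(\<Sum>k<n. X (m, k) * cofactor n i X k) = det_n n (upd_row i X (\<lambda>l. X (m, l)))"
    using assms(1) by (simp add: det_n_upd_row)
  also have "\<dots> = 0"
    using assms by (intro det_n_equal_rows[of i n m]) (auto simp: upd_row_def)
  finally show ?thesis .
qed

definition char_mod :: "nat \<Rightarrow> int \<Rightarrow> complex" where
  "char_mod N m = exp (2 * pi * \<i> * of_int m / of_nat N)"

lemma char_mod_add: "char_mod N (x + y) = char_mod N x * char_mod N y"
  unfolding char_mod_def by (simp add: exp_add[symmetric] add_divide_distrib distrib_left)

lemma norm_char_mod: "norm (char_mod N m) = 1"
proof -
  have "2 * pi * \<i> * of_int m / of_nat N = \<i> * complex_of_real (2 * pi * of_int m / real N)"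
    by simp
  then show ?thesis unfolding char_mod_def by (simp only: norm_exp_i_times)
qed

lemma char_mod_eq_1_iff:
  assumes "N > 0"
  shows "char_mod N m = 1 \<longleftrightarrow> int N dvd m"
proof
  assume "char_mod N m = 1"
  then obtain k :: int where "Im (2 * pi * \<i> * of_int m / of_nat N) = of_int (2 * k) * pi"
    unfolding char_mod_def exp_eq_1 by blast
  then have "2 * pi * of_int m / real N = 2 * of_int k * pi"
    by (simp add: Im_divide_of_nat)
  then have "real_of_int m = real_of_int (int N * k)"
    using assms by (simp add: field_simps)
  then show "int N dvd m" by (simp only: of_int_eq_iff dvd_triv_left)
next
  assume "int N dvd m"
  then obtain k where k: "m = int N * k" by blast
  have "2 * pi * \<i> * of_int m / of_nat N = (2 * of_int k * pi) * \<i>"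
    using assms by (simp add: k field_simps)
  then show "char_mod N m = 1"
    unfolding char_mod_def using exp_integer_2pi[of "of_int k"] by simp
qed

lemma char_mod_cong:
  assumes "N > 0" "[x = y] (mod int N)"
  shows "char_mod N x = char_mod N y"
proof -
  have "char_mod N x = char_mod N y * char_mod N (x - y)"
    by (simp flip: char_mod_add)
  also have "char_mod N (x - y) = 1"
    using assms by (simp add: char_mod_eq_1_iff cong_iff_dvd_diff)
  finally show ?thesis by simp
qed

lemma sum_eq_0_if_twisted:
  fixes f :: "'a \<Rightarrow> 'b::idom"
  assumes "finite A" "s ` A \<subseteq> A" "inj_on s A" "\<And>x. x \<in> A \<Longrightarrow> f (s x) = c * f x" "c \<noteq> 1"
  shows "sum f A = 0"
proof -
  have "sum f A = sum f (s ` A)" using endo_inj_surj[OF assms(1-3)] by simp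
  also have "\<dots> = sum (f \<circ> s) A" using sum.reindex[OF assms(3)] by simp
  also have "\<dots> = c * sum f A" using assms(4) by (simp add: sum_distrib_left)
  finally have "(c - 1) * sum f A = 0" by (simp add: algebra_simps)
  with assms(5) show ?thesis by simp
qed

lemma linear_congruence_unique_coordinate:
  fixes c x y :: "nat \<Rightarrow> int" and M :: int
  assumes "k < n" "\<And>l. l < n \<Longrightarrow> l \<noteq> k \<Longrightarrow> x l = y l"
    and "M dvd (\<Sum>l<n. c l * x l)" "M dvd (\<Sum>l<n. c l * y l)" "coprime (c k) M"
    and "x k \<in> {0..<M}" "y k \<in> {0..<M}"
  shows "x k = y k"
proof -
  have "(\<Sum>l<n. c l * x l) - (\<Sum>l<n. c l * y l) = (\<Sum>l<n. c l * (x l - y l))"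
    by (simp add: sum_subtractf right_diff_distrib)
  also have "\<dots> = (\<Sum>l<n. if l = k then c k * (x k - y k) else 0)"
    using assms(2) by (intro sum.cong) auto
  also have "\<dots> = c k * (x k - y k)" using assms(1) by simp
  finally have "M dvd c k * (x k - y k)" using assms(3,4) by (metis dvd_diff)
  then have "[x k = y k] (mod M)"
    using assms(5) by (simp add: cong_iff_dvd_diff coprime_commute coprime_dvd_mult_right_iff)
  then show ?thesis using assms(6,7) cong_less_imp_eq_int by auto
qed

lemma card_le_if_determined_on:
  assumes "finite Q" "finite B" "\<And>X q. X \<in> F \<Longrightarrow> q \<in> Q \<Longrightarrow> X q \<in> B"
    and "\<And>X Y. X \<in> F \<Longrightarrow> Y \<in> F \<Longrightarrow> (\<And>q. q \<in> Q \<Longrightarrow> X q = Y q) \<Longrightarrow> X = Y"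
  shows "card F \<le> card B ^ card Q"
proof -
  have "inj_on (\<lambda>X. restrict X Q) F"
  proof (rule inj_onI)
    fix X Y assume X: "X \<in> F" and Y: "Y \<in> F" and eq: "restrict X Q = restrict Y Q"
    show "X = Y"
    proof (rule assms(4)[OF X Y])
      fix q assume "q \<in> Q"
      then show "X q = Y q" using fun_cong[OF eq, of q] by simp
    qed
  qed
  moreover have "(\<lambda>X. restrict X Q) ` F \<subseteq> Q \<rightarrow>\<^sub>E B" using assms(3) by auto
  ultimately have "card F \<le> card (Q \<rightarrow>\<^sub>E B)"
    using assms(1,2) by (intro card_inj_on_le finite_PiE) auto
  also have "\<dots> = card B ^ card Q" using assms(1) by (simp add: card_PiE)
  finally show ?thesis .
qed

definition residue_matrices :: "nat \<Rightarrow> nat \<Rightarrow> (nat \<times> nat \<Rightarrow> int) set" where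
  "residue_matrices n N = ({..<n} \<times> {..<n}) \<rightarrow>\<^sub>E {0..<int N}"

definition singular_mod :: "nat \<Rightarrow> nat \<Rightarrow> (nat \<times> nat \<Rightarrow> int) set" where
  "singular_mod n N = {X \<in> residue_matrices n N. int N dvd det_n n X}"

definition lin_form :: "nat \<Rightarrow> (nat \<times> nat \<Rightarrow> int) \<Rightarrow> (nat \<times> nat \<Rightarrow> int) \<Rightarrow> int" where
  "lin_form n a X = (\<Sum>ij \<in> {..<n} \<times> {..<n}. a ij * X ij)"

lemma S_sum_eq: "S_sum n p a = (\<Sum>X\<in>singular_mod n (p\<^sup>2). char_mod (p\<^sup>2) (lin_form n a X))"
  by (simp add: S_sum_def singular_mod_def residue_matrices_def char_mod_def lin_form_def)

lemma finite_residue_matrices: "finite (residue_matrices n N)"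
  unfolding residue_matrices_def by (intro finite_PiE) auto

lemma finite_singular_mod: "finite (singular_mod n N)"
  by (rule finite_subset[OF _ finite_residue_matrices]) (auto simp: singular_mod_def)

lemma residue_matrices_entry:
  assumes "X \<in> residue_matrices n N" "j < n" "l < n"
  shows "X (j, l) \<in> {0..<int N}"
  using PiE_mem[OF assms(1)[unfolded residue_matrices_def], of "(j, l)"] assms(2,3) by simp

definition shift_row ::
    "nat \<Rightarrow> nat \<Rightarrow> nat \<Rightarrow> (nat \<Rightarrow> int) \<Rightarrow> (nat \<times> nat \<Rightarrow> int) \<Rightarrow> nat \<times> nat \<Rightarrow> int" where
  "shift_row n N i h X = upd_row i X (\<lambda>l. if l < n then (X (i, l) + h l) mod int N else X (i, l))"

definition other_rows :: "nat \<Rightarrow> nat \<Rightarrow> (nat \<times> nat \<Rightarrow> int) \<Rightarrow> nat \<times> nat \<Rightarrow> int" where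
  "other_rows n i X = restrict X (({..<n} - {i}) \<times> {..<n})"

definition fibre :: "nat \<Rightarrow> nat \<Rightarrow> nat \<Rightarrow> (nat \<times> nat \<Rightarrow> int) \<Rightarrow> (nat \<times> nat \<Rightarrow> int) set" where
  "fibre n N i y = {X \<in> singular_mod n N. other_rows n i X = y}"

definition orth_rows :: "nat \<Rightarrow> nat \<Rightarrow> nat \<Rightarrow> (nat \<times> nat \<Rightarrow> int) \<Rightarrow> (nat \<times> nat \<Rightarrow> int) set" where
  "orth_rows n N i a = {y \<in> (({..<n} - {i}) \<times> {..<n}) \<rightarrow>\<^sub>E {0..<int N}.
     \<forall>m<n. m \<noteq> i \<longrightarrow> int N dvd (\<Sum>k<n. a (i, k) * y (m, k))}"

lemma finite_fibre: "finite (fibre n N i y)"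
  by (rule finite_subset[OF _ finite_singular_mod]) (auto simp: fibre_def)

lemma other_rows_eqD:
  "other_rows n i X = other_rows n i Y \<Longrightarrow> j < n \<Longrightarrow> j \<noteq> i \<Longrightarrow> l < n \<Longrightarrow> X (j, l) = Y (j, l)"
  unfolding other_rows_def by (drule fun_cong[of _ _ "(j, l)"]) auto

lemma other_rows_mem:
  assumes "X \<in> residue_matrices n N"
  shows "other_rows n i X \<in> (({..<n} - {i}) \<times> {..<n}) \<rightarrow>\<^sub>E {0..<int N}"
  unfolding other_rows_def restrict_PiE_iff using residue_matrices_entry[OF assms] by auto

lemma other_rows_in_orth_rows_iff:
  assumes "X \<in> residue_matrices n N"
  shows "other_rows n i X \<in> orth_rows n N i a
    \<longleftrightarrow> (\<forall>m<n. m \<noteq> i \<longrightarrow> int N dvd (\<Sum>k<n. a (i, k) * X (m, k)))"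
  using assms by (auto simp: orth_rows_def other_rows_def residue_matrices_def)

lemma cofactor_fibre:
  "X \<in> fibre n N i y \<Longrightarrow> Y \<in> fibre n N i y \<Longrightarrow> cofactor n i X k = cofactor n i Y k"
  by (intro cofactor_cong other_rows_eqD[of n i]) (auto simp: fibre_def)

lemma fibre_row_congruence:
  assumes "i < n" "X0 \<in> fibre n N i y" "X \<in> fibre n N i y"
  shows "int N dvd (\<Sum>l<n. cofactor n i X0 l * X (i, l))"
  using assms det_n_row_expansion[OF assms(1), of X] cofactor_fibre[OF assms(3,2)]
  by (simp add: fibre_def singular_mod_def mult.commute)

lemma fibre_eqI:
  assumes "X \<in> fibre n N i y" "Y \<in> fibre n N i y" "\<And>l. l < n \<Longrightarrow> X (i, l) = Y (i, l)"
  shows "X = Y"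
proof (rule PiE_ext)
  show "X \<in> ({..<n} \<times> {..<n}) \<rightarrow>\<^sub>E {0..<int N}" "Y \<in> ({..<n} \<times> {..<n}) \<rightarrow>\<^sub>E {0..<int N}"
    using assms(1,2) by (auto simp: fibre_def singular_mod_def residue_matrices_def)
  show "X q = Y q" if "q \<in> {..<n} \<times> {..<n}" for q
    using that assms other_rows_eqD[of n i X Y] by (cases "fst q = i") (auto simp: fibre_def)
qed

lemma other_rows_shift_row: "other_rows n i (shift_row n N i h X) = other_rows n i X"
  unfolding other_rows_def shift_row_def upd_row_def by (auto simp: fun_eq_iff)

lemma shift_row_in_residue_matrices:
  "N > 0 \<Longrightarrow> i < n \<Longrightarrow> X \<in> residue_matrices n N \<Longrightarrow> shift_row n N i h X \<in> residue_matrices n N"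
  unfolding residue_matrices_def shift_row_def upd_row_def
  by (auto simp: PiE_def extensional_def Pi_def)

lemma inj_on_shift_row:
  assumes "i < n"
  shows "inj_on (shift_row n N i h) (residue_matrices n N)"
proof (rule inj_onI)
  fix X Y assume X: "X \<in> residue_matrices n N" and Y: "Y \<in> residue_matrices n N"
    and eq: "shift_row n N i h X = shift_row n N i h Y"
  show "X = Y"
  proof (rule PiE_ext[OF X[unfolded residue_matrices_def] Y[unfolded residue_matrices_def]])
    fix q assume "q \<in> {..<n} \<times> {..<n}"
    then obtain j l where q: "q = (j, l)" "j < n" "l < n" by blast
    show "X q = Y q"
    proof (cases "j = i")
      case True
      then have "[X (i, l) + h l = Y (i, l) + h l] (mod int N)"
        using q fun_cong[OF eq, of "(i, l)"] by (simp add: shift_row_def upd_row_def cong_def)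
      then have "[X (i, l) = Y (i, l)] (mod int N)" by (simp only: cong_add_rcancel)
      moreover have "X (i, l) \<in> {0..<int N}" "Y (i, l) \<in> {0..<int N}"
        using residue_matrices_entry[OF X] residue_matrices_entry[OF Y] q assms by auto
      ultimately show ?thesis
        using q True cong_less_imp_eq_int[of "X (i, l)" "int N" "Y (i, l)"] by simp
    next
      case False
      then show ?thesis using q fun_cong[OF eq, of q] by (simp add: shift_row_def upd_row_def)
    qed
  qed
qed

lemma det_n_shift_row:
  assumes "i < n"
  shows "[det_n n (shift_row n N i h X) = det_n n X + (\<Sum>k<n. h k * cofactor n i X k)] (mod int N)"
proof -
  let ?r = "\<lambda>l. if l < n then (X (i, l) + h l) mod int N else X (i, l)"
  have "det_n n (shift_row n N i h X) = (\<Sum>k<n. ?r k * cofactor n i X k)"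
    unfolding shift_row_def using assms by (rule det_n_upd_row)
  also have "[\<dots> = (\<Sum>k<n. (X (i, k) + h k) * cofactor n i X k)] (mod int N)"
    by (intro cong_sum cong_mult cong_refl) (simp add: cong_def)
  also have "(\<Sum>k<n. (X (i, k) + h k) * cofactor n i X k) = det_n n X + (\<Sum>k<n. h k * cofactor n i X k)"
    using det_n_row_expansion[OF assms, of X] by (simp add: distrib_right sum.distrib)
  finally show ?thesis .
qed

lemma lin_form_upd_row:
  assumes "i < n"
  shows "lin_form n a (upd_row i X r) = lin_form n a X + (\<Sum>l<n. a (i, l) * (r l - X (i, l)))"
proof -
  have "lin_form n a (upd_row i X r) - lin_form n a X
      = (\<Sum>j<n. \<Sum>l<n. a (j, l) * (upd_row i X r (j, l) - X (j, l)))"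
    unfolding lin_form_def by (simp add: sum.cartesian_product sum_subtractf right_diff_distrib)
  also have "\<dots> = (\<Sum>j<n. if j = i then (\<Sum>l<n. a (i, l) * (r l - X (i, l))) else 0)"
    by (intro sum.cong refl) (auto simp: upd_row_def)
  finally show ?thesis using assms by simp
qed

lemma lin_form_shift_row:
  assumes "i < n"
  shows "[lin_form n a (shift_row n N i h X) = lin_form n a X + (\<Sum>k<n. a (i, k) * h k)] (mod int N)"
proof -
  let ?r = "\<lambda>l. if l < n then (X (i, l) + h l) mod int N else X (i, l)"
  have "lin_form n a (shift_row n N i h X) = lin_form n a X + (\<Sum>l<n. a (i, l) * (?r l - X (i, l)))"
    unfolding shift_row_def using assms by (rule lin_form_upd_row)
  also have "[\<dots> = lin_form n a X + (\<Sum>l<n. a (i, l) * ((X (i, l) + h l) - X (i, l)))] (mod int N)"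
    by (intro cong_add cong_sum cong_mult cong_diff cong_refl) (simp add: cong_def)
  finally show ?thesis by simp
qed

lemma fibre_sum_eq_0:
  assumes "N > 0" "i < n" "X0 \<in> fibre n N i y"
    and "int N dvd (\<Sum>k<n. h k * cofactor n i X0 k)" "\<not> int N dvd (\<Sum>k<n. a (i, k) * h k)"
  shows "(\<Sum>X\<in>fibre n N i y. char_mod N (lin_form n a X)) = 0"
proof (rule sum_eq_0_if_twisted[where s = "shift_row n N i h" and c = "char_mod N (\<Sum>k<n. a (i, k) * h k)"])
  show "finite (fibre n N i y)" by (rule finite_fibre)
  show "shift_row n N i h ` fibre n N i y \<subseteq> fibre n N i y"
  proof clarify
    fix X assume X: "X \<in> fibre n N i y"
    have "[det_n n (shift_row n N i h X) = det_n n X + (\<Sum>k<n. h k * cofactor n i X0 k)] (mod int N)"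
      using det_n_shift_row[OF assms(2), of N h X] cofactor_fibre[OF X assms(3)] by simp
    also have "[det_n n X + (\<Sum>k<n. h k * cofactor n i X0 k) = 0] (mod int N)"
      using X assms(4) by (simp add: cong_0_iff fibre_def singular_mod_def)
    finally show "shift_row n N i h X \<in> fibre n N i y"
      using X assms(1,2)
      by (simp add: cong_0_iff fibre_def singular_mod_def other_rows_shift_row shift_row_in_residue_matrices)
  qed
  show "inj_on (shift_row n N i h) (fibre n N i y)"
    by (rule inj_on_subset[OF inj_on_shift_row[OF assms(2)]]) (auto simp: fibre_def singular_mod_def)
  show "char_mod N (lin_form n a (shift_row n N i h X))
      = char_mod N (\<Sum>k<n. a (i, k) * h k) * char_mod N (lin_form n a X)" for X
    using char_mod_cong[OF assms(1) lin_form_shift_row[OF assms(2)]] by (simp add: char_mod_add)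
  show "char_mod N (\<Sum>k<n. a (i, k) * h k) \<noteq> 1"
    using assms(1,5) by (simp add: char_mod_eq_1_iff)
qed

lemma card_fibre_le:
  assumes "i < n" "X0 \<in> fibre n N i y" "k < n" "coprime (cofactor n i X0 k) (int N)"
  shows "card (fibre n N i y) \<le> N ^ (n - 1)"
proof -
  have "card (fibre n N i y) \<le> card {0..<int N} ^ card ({i} \<times> ({..<n} - {k}))"
  proof (rule card_le_if_determined_on)
    show "X q \<in> {0..<int N}" if "X \<in> fibre n N i y" "q \<in> {i} \<times> ({..<n} - {k})" for X q
      using that assms(1) residue_matrices_entry[of X n N i] by (auto simp: fibre_def singular_mod_def)
    fix X Y assume X: "X \<in> fibre n N i y" and Y: "Y \<in> fibre n N i y"
      and eq: "\<And>q. q \<in> {i} \<times> ({..<n} - {k}) \<Longrightarrow> X q = Y q"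
    have column_k: "X (i, k) = Y (i, k)"
    proof (rule linear_congruence_unique_coordinate[where x = "\<lambda>l. X (i, l)" and y = "\<lambda>l. Y (i, l)"
        and c = "cofactor n i X0" and M = "int N"])
      show "X (i, l) = Y (i, l)" if "l < n" "l \<noteq> k" for l
        using eq that by simp
      show "int N dvd (\<Sum>l<n. cofactor n i X0 l * X (i, l))"
        using fibre_row_congruence[OF assms(1,2) X] .
      show "int N dvd (\<Sum>l<n. cofactor n i X0 l * Y (i, l))"
        using fibre_row_congruence[OF assms(1,2) Y] .
      show "X (i, k) \<in> {0..<int N}" "Y (i, k) \<in> {0..<int N}"
        using X Y assms(1,3) residue_matrices_entry[of _ n N i k] by (auto simp: fibre_def singular_mod_def)
    qed (fact assms)+
    show "X = Y"
    proof (rule fibre_eqI[OF X Y])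
      fix l assume "l < n"
      then show "X (i, l) = Y (i, l)" using eq column_k by (cases "l = k") auto
    qed
  qed simp_all
  also have "\<dots> = N ^ (n - 1)" using assms by simp
  finally show ?thesis .
qed

lemma card_orth_rows_le:
  assumes "i < n" "k < n" "coprime (a (i, k)) (int N)"
  shows "card (orth_rows n N i a) \<le> N ^ ((n - 1) * (n - 1))"
proof -
  let ?Q = "({..<n} - {i}) \<times> ({..<n} - {k})"
  have "card (orth_rows n N i a) \<le> card {0..<int N} ^ card ?Q"
  proof (rule card_le_if_determined_on)
    show "y q \<in> {0..<int N}" if "y \<in> orth_rows n N i a" "q \<in> ?Q" for y q
      using that by (auto simp: orth_rows_def)
    fix y z assume y: "y \<in> orth_rows n N i a" and z: "z \<in> orth_rows n N i a"
      and eq: "\<And>q. q \<in> ?Q \<Longrightarrow> y q = z q"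
    have column_k: "y (m, k) = z (m, k)" if "m < n" "m \<noteq> i" for m
    proof (rule linear_congruence_unique_coordinate[where x = "\<lambda>l. y (m, l)" and y = "\<lambda>l. z (m, l)"
        and c = "\<lambda>l. a (i, l)" and M = "int N"])
      show "int N dvd (\<Sum>l<n. a (i, l) * y (m, l))" "int N dvd (\<Sum>l<n. a (i, l) * z (m, l))"
        using y z that by (auto simp: orth_rows_def)
      show "y (m, k) \<in> {0..<int N}" "z (m, k) \<in> {0..<int N}"
        using y z that assms(2) by (auto simp: orth_rows_def)
    qed (use assms eq that in auto)
    show "y = z"
    proof (rule PiE_ext)
      show "y \<in> (({..<n} - {i}) \<times> {..<n}) \<rightarrow>\<^sub>E {0..<int N}"
        "z \<in> (({..<n} - {i}) \<times> {..<n}) \<rightarrow>\<^sub>E {0..<int N}"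
        using y z by (simp_all add: orth_rows_def)
      fix q assume "q \<in> ({..<n} - {i}) \<times> {..<n}"
      then obtain m l where "q = (m, l)" "m < n" "m \<noteq> i" "l < n" by blast
      then show "y q = z q" using eq column_k by (cases "l = k") auto
    qed
  qed (auto)
  also have "\<dots> = N ^ ((n - 1) * (n - 1))" using assms by (simp add: card_cartesian_product)
  finally show ?thesis .
qed

lemma coprime_prime_square_if_not_dvd:
  assumes "prime p" "\<not> int p dvd c"
  shows "coprime c (int (p\<^sup>2))"
  using assms prime_imp_coprime[of "int p" c] by (simp add: coprime_commute)

lemma fibre_sum_eq_0_if_prime_dvd_cofactor:
  assumes "prime p" "i < n" "k < n" "\<not> int p dvd a (i, k)"
    and "X0 \<in> fibre n (p\<^sup>2) i y" "int p dvd cofactor n i X0 k"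
  shows "(\<Sum>X\<in>fibre n (p\<^sup>2) i y. char_mod (p\<^sup>2) (lin_form n a X)) = 0"
proof (rule fibre_sum_eq_0[OF _ assms(2,5)])
  define h where "h l = (if l = k then int p else 0)" for l
  have "(\<Sum>l<n. h l * cofactor n i X0 l) = (\<Sum>l<n. if l = k then int p * cofactor n i X0 k else 0)"
    by (intro sum.cong) (auto simp: h_def)
  also have "\<dots> = int p * cofactor n i X0 k" using assms(3) by simp
  finally show "int (p\<^sup>2) dvd (\<Sum>l<n. h l * cofactor n i X0 l)"
    using assms(6) by (simp add: power2_eq_square)
  have "(\<Sum>l<n. a (i, l) * h l) = (\<Sum>l<n. if l = k then a (i, k) * int p else 0)"
    by (intro sum.cong) (auto simp: h_def)
  also have "\<dots> = a (i, k) * int p" using assms(3) by simp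
  finally show "\<not> int (p\<^sup>2) dvd (\<Sum>l<n. a (i, l) * h l)"
    using assms(1,4) by (simp add: power2_eq_square prime_gt_0_nat)
  show "p\<^sup>2 > 0" using assms(1) by (simp add: prime_gt_0_nat)
qed

lemma norm_fibre_sum_le:
  assumes "prime p" "i < n" "k < n" "\<not> int p dvd a (i, k)"
  shows "norm (\<Sum>X\<in>fibre n (p\<^sup>2) i y. char_mod (p\<^sup>2) (lin_form n a X))
    \<le> (if y \<in> orth_rows n (p\<^sup>2) i a then real ((p\<^sup>2) ^ (n - 1)) else 0)"
proof (cases "fibre n (p\<^sup>2) i y = {}")
  case False
  then obtain X0 where X0: "X0 \<in> fibre n (p\<^sup>2) i y" by blast
  have N: "p\<^sup>2 > 0" using assms(1) by (simp add: prime_gt_0_nat)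
  have y: "y = other_rows n i X0" "X0 \<in> residue_matrices n (p\<^sup>2)"
    using X0 by (auto simp: fibre_def singular_mod_def)
  consider (not_orth) m where "m < n" "m \<noteq> i" "\<not> int (p\<^sup>2) dvd (\<Sum>l<n. a (i, l) * X0 (m, l))"
    | (cofactor_dvd) "y \<in> orth_rows n (p\<^sup>2) i a" "int p dvd cofactor n i X0 k"
    | (cofactor_unit) "y \<in> orth_rows n (p\<^sup>2) i a" "\<not> int p dvd cofactor n i X0 k"
    using other_rows_in_orth_rows_iff[OF y(2)] y(1) by blast
  then show ?thesis
  proof cases
    case not_orth
    then show ?thesis
      using fibre_sum_eq_0[OF N assms(2) X0, of "\<lambda>l. X0 (m, l)"] alien_cofactor_expansion[OF assms(2)]
      by simp
  next
    case cofactor_dvd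
    then show ?thesis using fibre_sum_eq_0_if_prime_dvd_cofactor[where a = a, OF assms X0] by simp
  next
    case cofactor_unit
    have "norm (\<Sum>X\<in>fibre n (p\<^sup>2) i y. char_mod (p\<^sup>2) (lin_form n a X))
        \<le> (\<Sum>X\<in>fibre n (p\<^sup>2) i y. norm (char_mod (p\<^sup>2) (lin_form n a X)))"
      by (rule norm_sum)
    also have "\<dots> = card (fibre n (p\<^sup>2) i y)" by (simp add: norm_char_mod)
    also have "card (fibre n (p\<^sup>2) i y) \<le> (p\<^sup>2) ^ (n - 1)"
      using card_fibre_le[OF assms(2) X0 assms(3)] coprime_prime_square_if_not_dvd[OF assms(1)]
        cofactor_unit(2) by blast
    finally show ?thesis using cofactor_unit(1) by simp
  qed
qed simp

lemma norm_S_sum_le: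
  assumes "prime p" "i < n" "k < n" "\<not> int p dvd a (i, k)"
  shows "norm (S_sum n p a) \<le> real ((p\<^sup>2) ^ (n * (n - 1)))"
proof -
  let ?N = "p\<^sup>2"
  let ?Y = "(({..<n} - {i}) \<times> {..<n}) \<rightarrow>\<^sub>E {0..<int ?N}"
  let ?B = "real (?N ^ (n - 1))"
  let ?F = "\<lambda>y. \<Sum>X\<in>fibre n ?N i y. char_mod ?N (lin_form n a X)"
  have "other_rows n i ` singular_mod n ?N \<subseteq> ?Y"
    by (rule image_subsetI, rule other_rows_mem) (simp add: singular_mod_def)
  moreover have "finite ?Y" by (intro finite_PiE) auto
  ultimately have S: "S_sum n p a = (\<Sum>y\<in>?Y. ?F y)"
    unfolding S_sum_eq fibre_def by (intro sum.group[OF finite_singular_mod, symmetric])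
  have "norm (S_sum n p a) \<le> (\<Sum>y\<in>?Y. norm (?F y))" unfolding S by (rule norm_sum)
  also have "\<dots> \<le> (\<Sum>y\<in>?Y. if y \<in> orth_rows n ?N i a then ?B else 0)"
    by (rule sum_mono) (rule norm_fibre_sum_le[where p = p and i = i and k = k and a = a, OF assms])
  also have "\<dots> = real (card (orth_rows n ?N i a)) * ?B"
  proof -
    have "?Y \<inter> {y. y \<in> orth_rows n ?N i a} = orth_rows n ?N i a" by (auto simp: orth_rows_def)
    then show ?thesis by (simp add: sum.If_cases finite_PiE)
  qed
  also have "\<dots> \<le> real (?N ^ ((n - 1) * (n - 1))) * ?B"
    using card_orth_rows_le[where a = a, OF assms(2,3) coprime_prime_square_if_not_dvd[OF assms(1,4)]]
    by (intro mult_right_mono of_nat_mono) simp_all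
  also have "\<dots> = real (?N ^ (n * (n - 1)))"
    by (cases n) (simp_all add: add.commute flip: power_add of_nat_mult)
  finally show ?thesis .
qed

theorem lemma3p6:
  fixes n :: nat
  assumes "n \<ge> 1"
  shows "\<exists>C>0. \<forall>(p::nat) (a::nat \<times> nat \<Rightarrow> int).
           prime p \<longrightarrow> (\<exists>i<n. \<exists>j<n. \<not> int p dvd a (i, j)) \<longrightarrow>
           cmod (S_sum n p a) \<le> C * real p powr (2 * real n ^ 2 - (real n + 3) / 2)"
proof (intro exI[of _ 1] conjI allI impI)
  fix p :: nat and a :: "nat \<times> nat \<Rightarrow> int"
  assume p: "prime p" and "\<exists>i<n. \<exists>j<n. \<not> int p dvd a (i, j)"
  then obtain i k where "i < n" "k < n" "\<not> int p dvd a (i, k)" by blast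
  then have "cmod (S_sum n p a) \<le> real ((p\<^sup>2) ^ (n * (n - 1)))" by (rule norm_S_sum_le[OF p])
  also have "\<dots> = real p powr real (2 * (n * (n - 1)))"
    using prime_gt_0_nat[OF p] by (subst powr_realpow) (simp_all add: power_mult)
  also have "\<dots> \<le> real p powr (2 * real n ^ 2 - (real n + 3) / 2)"
  proof (rule powr_mono)
    show "real (2 * (n * (n - 1))) \<le> 2 * real n ^ 2 - (real n + 3) / 2"
      using assms by (simp add: of_nat_diff power2_eq_square algebra_simps)
    show "1 \<le> real p" using prime_ge_1_nat[OF p] by simp
  qed
  finally show "cmod (S_sum n p a) \<le> 1 * real p powr (2 * real n ^ 2 - (real n + 3) / 2)" by simp
qed simp

end
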